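(* Let $N\ge 2$, $p\ge 2$, $0<r_0<R_0\le\infty$, $\Omega=B]r_0,R_0[$, and let $V\in C(\Omega)$ satisfy either $V>0$ in $\Omega$ or $V\equiv 0$. Let $u$ be a positive radial strictly monotone $C^2$-subsolution and $v$ a positive radial strictly monotone $C^2$-supersolution of $-\Delta_p w-V|w|^{p-2}w=0$ in $\Omega$. Then at least one of the following holds: (i) $(u/v)'(r)\le 0$ for all $r\in[r_0,R_0[$; (ii) there exists $\rho^*\in[r_0,R_0[$ such that $(u/v)'(r)\ge 0$ for all $r\in[\rho^*,R_0[$.
   Context: $\Delta_p w=\nabla\cdot(|\nabla w|^{p-2}\nabla w)$. $B]r_0,R_0[=\{x\in\mathbb{R}^N: r_0<|x|<R_0\}$, $B[r_0,R_0[=\{x: r_0\le|x|<R_0\}$. A $C^2$-subsolution (resp. supersolution) in $\Omega$ is $w\in C^2(B[r_0,R_0[)$ with $-\Delta_p w-V|w|^{p-2}w\le 0$ (resp. $\ge0$) pointwise in $\Omega$. Radial functions $w(x)=\phi(|x|)$ are identified with $\phi$ and $'$ denotes derivative in $r=|x|$; strictly monotone means $w'>0$ on $[r_0,R_0[$ or $w'<0$ on $[r_0,R_0[$. *)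

theory Defs
  imports "HOL-Analysis.Analysis"
begin

definition grad :: "('a::euclidean_space \<Rightarrow> real) \<Rightarrow> 'a \<Rightarrow> 'a" where
  "grad w x = (\<Sum>i\<in>Basis. frechet_derivative w (at x) i *\<^sub>R i)"

definition divergence :: "('a::euclidean_space \<Rightarrow> 'a) \<Rightarrow> 'a \<Rightarrow> real" where
  "divergence F x = (\<Sum>i\<in>Basis. frechet_derivative F (at x) i \<bullet> i)"

definition rpow :: "real \<Rightarrow> real \<Rightarrow> real" where
  "rpow t a = (if a = 0 then 1 else t powr a)"

definition plap :: "real \<Rightarrow> ('a::euclidean_space \<Rightarrow> real) \<Rightarrow> 'a \<Rightarrow> real" where
  "plap p w = divergence (\<lambda>y. rpow (norm (grad w y)) (p - 2) *\<^sub>R grad w y)"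

definition C2_on :: "'a::euclidean_space set \<Rightarrow> ('a \<Rightarrow> real) \<Rightarrow> bool" where
  "C2_on U w \<longleftrightarrow> open U \<and>
     (\<forall>x\<in>U. w differentiable (at x)) \<and> continuous_on U (grad w) \<and>
     (\<forall>x\<in>U. grad w differentiable (at x)) \<and>
     (\<forall>i\<in>Basis. continuous_on U (\<lambda>x. frechet_derivative (grad w) (at x) i))"

definition annulus_oo :: "real \<Rightarrow> ereal \<Rightarrow> 'a::euclidean_space set" where
  "annulus_oo r0 R0 = {x. r0 < norm x \<and> ereal (norm x) < R0}"

definition annulus_co :: "real \<Rightarrow> ereal \<Rightarrow> 'a::euclidean_space set" where
  "annulus_co r0 R0 = {x. r0 \<le> norm x \<and> ereal (norm x) < R0}"

definition C2_annulus :: "real \<Rightarrow> ereal \<Rightarrow> ('a::euclidean_space \<Rightarrow> real) \<Rightarrow> bool" where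
  "C2_annulus r0 R0 w \<longleftrightarrow> (\<exists>U. annulus_co r0 R0 \<subseteq> U \<and> C2_on U w)"

end

theory Submission
  imports Defs
begin

(* Write a = phi'/phi and b = psi'/psi for the radial profiles, so that (phi/psi)' has the sign of
   a - b. For radial w = phi(r) one has Delta_p w = r^(1-N) (r^(N-1) J(phi'))' with J(t) = |t|^(p-2) t
   (signed_pow below), hence Q_phi = r^(N-1) J(phi')/phi^(p-1) = r^(N-1) J(a) satisfies
   Q_phi' = r^(N-1) (Delta_p w / phi^(p-1) - (p-1) |a|^p).
   In D = Q_phi - Q_psi the potential cancels, and the sub/supersolution inequalities give
   D' >= (p-1) r^(N-1) (|b|^p - |a|^p), which is nonnegative where |a| < |b|. As sgn D = sgn (a - b)
   and a, b have constant signs, the set {a < b} is closed to the left when phi and psi both increase,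
   and {a > b} is closed to the right when both decrease; the mixed cases are immediate. *)

definition signed_pow :: "real \<Rightarrow> real \<Rightarrow> real" where
  "signed_pow p t = sgn t * \<bar>t\<bar> powr (p - 1)"

lemma signed_pow_eq_mult_abs_powr: "signed_pow p t = t * \<bar>t\<bar> powr (p - 2)"
proof (cases "t = 0")
  case False
  then have "\<bar>t\<bar> powr (p - 1) = \<bar>t\<bar> * \<bar>t\<bar> powr (p - 2)"
    by (simp add: powr_diff field_simps power2_eq_square)
  then show ?thesis by (simp add: signed_pow_def mult.assoc[symmetric] sgn_mult_abs)
qed (simp add: signed_pow_def)

lemma rpow_abs_mult_eq_signed_pow: "rpow \<bar>t\<bar> (p - 2) * t = signed_pow p t"
  by (cases "t = 0") (simp_all add: rpow_def signed_pow_eq_mult_abs_powr)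

lemma signed_pow_mult_self: "signed_pow p t * t = \<bar>t\<bar> powr p"
proof (cases "t = 0")
  case False
  have "\<bar>t\<bar> powr p = \<bar>t\<bar> powr (p - 1) * \<bar>t\<bar>"
    using False by (simp add: powr_diff)
  then show ?thesis by (simp add: signed_pow_def abs_sgn mult.commute mult.left_commute)
qed (simp add: signed_pow_def)

lemma signed_pow_divide_pos: "c > 0 \<Longrightarrow> signed_pow p (t / c) = signed_pow p t / c powr (p - 1)"
  by (simp add: signed_pow_def powr_divide)

lemma signed_pow_pos: "t > 0 \<Longrightarrow> signed_pow p t = t powr (p - 1)"
  by (simp add: signed_pow_def)

lemma signed_pow_strict_mono:
  assumes "p > 1" shows "strict_mono (signed_pow p)"
proof (rule strict_monoI)
  have odd: "signed_pow p (- t) = - signed_pow p t" for t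
    by (simp add: signed_pow_def)
  have pos_mono: "signed_pow p x < signed_pow p y" if "0 \<le> x" "x < y" for x y
    using that assms by (cases "x = 0") (simp_all add: signed_pow_def powr_less_mono2)
  fix x y :: real assume "x < y"
  then consider "0 \<le> x" | "x < 0" "0 \<le> y" | "y < 0" by linarith
  then show "signed_pow p x < signed_pow p y"
  proof cases
    case 2
    then have "signed_pow p x < 0" "0 \<le> signed_pow p y"
      by (simp_all add: signed_pow_def sgn_if)
    then show ?thesis by linarith
  qed (use pos_mono[of x y] pos_mono[of "- y" "- x"] odd \<open>x < y\<close> in auto)
qed

lemma sgn_signed_pow_diff:
  assumes "p > 1" shows "sgn (signed_pow p x - signed_pow p y) = sgn (x - y)"
  using strict_mono_less[OF signed_pow_strict_mono[OF assms], of x y]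
        strict_mono_less[OF signed_pow_strict_mono[OF assms], of y x]
  by (cases x y rule: linorder_cases) (simp_all add: sgn_if)

lemma has_real_derivative_signed_pow:
  assumes "t \<noteq> 0"
  shows "(signed_pow p has_real_derivative (p - 1) * \<bar>t\<bar> powr (p - 2)) (at t)"
proof -
  have sgn_t: "sgn t * t = \<bar>t\<bar>" "sgn t * sgn t = 1"
    using assms by (simp_all add: sgn_mult_abs sgn_if)
  have deriv: "((\<lambda>s. sgn t * (sgn t * s) powr (p - 1)) has_real_derivative (p - 1) * \<bar>t\<bar> powr (p - 2)) (at t)"
    using assms sgn_t by (auto intro!: derivative_eq_intros simp: algebra_simps)
  have eq: "signed_pow p s = sgn t * (sgn t * s) powr (p - 1)" if "0 < sgn t * s" for s
    using that by (auto simp: signed_pow_def sgn_if split: if_splits)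
  have "open {s. 0 < sgn t * s}"
    by (intro open_Collect_less continuous_intros)
  then show ?thesis
    by (rule has_field_derivative_transform_within_open[OF deriv]) (use assms sgn_t eq in auto)
qed

lemma has_real_derivative_flux_quotient:
  fixes f f1 :: "real \<Rightarrow> real" and m :: nat
  assumes f: "(f has_real_derivative f1 r) (at r)" and f1: "(f1 has_real_derivative f2) (at r)"
    and pos: "f r > 0" and nz: "f1 r \<noteq> 0" "r \<noteq> 0"
  shows "((\<lambda>s. s ^ m * signed_pow p (f1 s / f s)) has_real_derivative
      r ^ m * (((p - 1) * \<bar>f1 r\<bar> powr (p - 2) * f2 + m * signed_pow p (f1 r) / r) / f r powr (p - 1)
               - (p - 1) * \<bar>f1 r / f r\<bar> powr p)) (at r)"
proof -
  define a where "a = f1 r / f r"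
  have "(signed_pow p has_real_derivative (p - 1) * \<bar>a\<bar> powr (p - 2)) (at (f1 r / f r))"
    using has_real_derivative_signed_pow[of a p] pos nz by (simp add: a_def)
  moreover have "((\<lambda>s. f1 s / f s) has_real_derivative f2 / f r - a\<^sup>2) (at r)"
    using DERIV_divide[OF f1 f] pos by (simp add: a_def field_simps power2_eq_square)
  ultimately have "((\<lambda>s. signed_pow p (f1 s / f s)) has_real_derivative
      (p - 1) * \<bar>a\<bar> powr (p - 2) * (f2 / f r - a\<^sup>2)) (at r)"
    by (rule DERIV_chain2)
  from DERIV_mult[OF DERIV_pow[of m r] this]
  have deriv: "((\<lambda>s. s ^ m * signed_pow p (f1 s / f s)) has_real_derivative
      m * r ^ (m - 1) * signed_pow p a + r ^ m * ((p - 1) * \<bar>a\<bar> powr (p - 2) * (f2 / f r - a\<^sup>2))) (at r)"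
    by (simp add: a_def mult.commute)
  have G: "signed_pow p a = signed_pow p (f1 r) / f r powr (p - 1)"
    using pos by (simp add: a_def signed_pow_divide_pos)
  have P: "\<bar>a\<bar> powr (p - 2) * (f2 / f r) = \<bar>f1 r\<bar> powr (p - 2) * f2 / f r powr (p - 1)"
  proof -
    have "f r powr (p - 1) = f r powr (p - 2) * f r"
      using pos powr_add[of "f r" "p - 2" 1] by simp
    then show ?thesis using pos by (simp add: a_def powr_divide)
  qed
  have Q: "\<bar>a\<bar> powr (p - 2) * a\<^sup>2 = \<bar>a\<bar> powr p"
    using signed_pow_mult_self[of p a] by (simp add: signed_pow_eq_mult_abs_powr power2_eq_square ac_simps)
  have "m * r ^ (m - 1) = r ^ m * (m / r)"
    using nz by (cases m) simp_all
  then have "m * r ^ (m - 1) * signed_pow p a + r ^ m * ((p - 1) * \<bar>a\<bar> powr (p - 2) * (f2 / f r - a\<^sup>2))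
      = r ^ m * (m / r * signed_pow p a + (p - 1) * (\<bar>a\<bar> powr (p - 2) * (f2 / f r))
                 - (p - 1) * (\<bar>a\<bar> powr (p - 2) * a\<^sup>2))"
    by (simp add: algebra_simps diff_divide_distrib)
  also have "\<dots> = r ^ m * (((p - 1) * \<bar>f1 r\<bar> powr (p - 2) * f2 + m * signed_pow p (f1 r) / r) / f r powr (p - 1)
                 - (p - 1) * \<bar>a\<bar> powr p)"
    unfolding G P Q by (simp add: add_divide_distrib)
  finally have eq: "m * r ^ (m - 1) * signed_pow p a
      + r ^ m * ((p - 1) * \<bar>a\<bar> powr (p - 2) * (f2 / f r - a\<^sup>2)) = \<dots>" .
  show ?thesis
    using deriv unfolding eq unfolding a_def .
qed

lemma has_derivative_radial:
  fixes y :: "'a::euclidean_space"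
  assumes "y \<noteq> 0" "(f has_real_derivative f1) (at (norm y))"
  shows "((\<lambda>x. f (norm x)) has_derivative (\<lambda>h. f1 * (h \<bullet> sgn y))) (at y)"
  using has_derivative_compose[OF has_derivative_norm[OF assms(1)] assms(2)[unfolded has_field_derivative_def]]
  by (simp add: o_def)

lemma grad_radial:
  fixes y :: "'a::euclidean_space"
  assumes "y \<noteq> 0" "(f has_real_derivative f1) (at (norm y))"
  shows "grad (\<lambda>x. f (norm x)) y = f1 *\<^sub>R sgn y"
proof -
  have "frechet_derivative (\<lambda>x. f (norm x)) (at y) = (\<lambda>h. f1 * (h \<bullet> sgn y))"
    using frechet_derivative_at[OF has_derivative_radial[OF assms]] by simp
  then have "grad (\<lambda>x. f (norm x)) y = (\<Sum>i\<in>Basis. (f1 * (i \<bullet> sgn y)) *\<^sub>R i)"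
    by (simp add: grad_def)
  also have "\<dots> = f1 *\<^sub>R (\<Sum>i\<in>Basis. (sgn y \<bullet> i) *\<^sub>R i)"
    by (simp add: scaleR_sum_right inner_commute)
  also have "\<dots> = f1 *\<^sub>R sgn y" by (simp add: euclidean_representation)
  finally show ?thesis .
qed

lemma divergence_radial:
  fixes y :: "'a::euclidean_space" and F :: "'a \<Rightarrow> 'a"
  assumes y: "y \<noteq> 0" and H: "(H has_real_derivative H1) (at (norm y))"
    and S: "open S" "y \<in> S" and F: "\<And>z. z \<in> S \<Longrightarrow> F z = (H (norm z) / norm z) *\<^sub>R z"
  shows "divergence F y = H1 + real (DIM('a) - 1) * H (norm y) / norm y"
proof -
  define r where "r = norm y"
  have r: "r > 0" using y by (simp add: r_def)
  define k1 where "k1 = (H1 * r - H r) / r^2"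
  have "((\<lambda>t. H t / t) has_real_derivative k1) (at (norm y))"
    using H r unfolding r_def k1_def
    by (auto intro!: derivative_eq_intros simp: power2_eq_square field_simps)
  from has_derivative_scaleR[OF has_derivative_radial[OF y this] has_derivative_ident]
  have "((\<lambda>z. (H (norm z) / norm z) *\<^sub>R z) has_derivative
     (\<lambda>h. (H r / r) *\<^sub>R h + (k1 * (h \<bullet> sgn y)) *\<^sub>R y)) (at y)"
    unfolding r_def by simp
  then have "(F has_derivative (\<lambda>h. (H r / r) *\<^sub>R h + (k1 * (h \<bullet> sgn y)) *\<^sub>R y)) (at y)"
    by (rule has_derivative_transform_within_open[OF _ S]) (simp add: F)
  then have "divergence F y = (\<Sum>i\<in>Basis. ((H r / r) *\<^sub>R i + (k1 * (i \<bullet> sgn y)) *\<^sub>R y) \<bullet> i)"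
    by (simp add: divergence_def frechet_derivative_at[symmetric])
  also have "\<dots> = (\<Sum>i\<in>Basis. H r / r + k1 * ((sgn y \<bullet> i) * (y \<bullet> i)))"
    by (intro sum.cong refl) (simp add: inner_add_right inner_commute)
  also have "\<dots> = real DIM('a) * (H r / r) + k1 * (sgn y \<bullet> y)"
    by (simp add: sum.distrib sum_distrib_left euclidean_inner[of "sgn y" y])
  also have "sgn y \<bullet> y = r"
    using y by (simp add: sgn_div_norm r_def dot_square_norm power2_eq_square)
  also have "k1 * r = H1 - H r / r" using r by (simp add: k1_def field_simps power2_eq_square)
  finally show ?thesis
    unfolding r_def[symmetric] by (simp add: of_nat_diff algebra_simps diff_divide_distrib)
qed

lemma plap_radial:
  fixes y :: "'a::euclidean_space" and f f1 :: "real \<Rightarrow> real"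
  assumes S: "open S" "y \<in> S" "0 \<notin> S"
    and f: "\<And>z. z \<in> S \<Longrightarrow> (f has_real_derivative f1 (norm z)) (at (norm z))"
    and f1: "(f1 has_real_derivative f2) (at (norm y))" and nz: "f1 (norm y) \<noteq> 0"
  shows "plap p (\<lambda>x. f (norm x)) y = (p - 1) * \<bar>f1 (norm y)\<bar> powr (p - 2) * f2
           + real (DIM('a) - 1) * signed_pow p (f1 (norm y)) / norm y"
proof -
  have flux: "rpow (norm (grad (\<lambda>x. f (norm x)) z)) (p - 2) *\<^sub>R grad (\<lambda>x. f (norm x)) z
      = (signed_pow p (f1 (norm z)) / norm z) *\<^sub>R z" if "z \<in> S" for z
  proof -
    have "z \<noteq> 0" using that S by auto
    then have g: "grad (\<lambda>x. f (norm x)) z = f1 (norm z) *\<^sub>R sgn z"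
      using grad_radial f[OF that] by blast
    then have "norm (grad (\<lambda>x. f (norm x)) z) = \<bar>f1 (norm z)\<bar>"
      using \<open>z \<noteq> 0\<close> by (simp add: norm_sgn)
    then show ?thesis
      using g rpow_abs_mult_eq_signed_pow[of "f1 (norm z)" p]
      by (simp add: sgn_div_norm divide_inverse)
  qed
  have "((\<lambda>t. signed_pow p (f1 t)) has_real_derivative (p - 1) * \<bar>f1 (norm y)\<bar> powr (p - 2) * f2) (at (norm y))"
    using DERIV_chain2[OF has_real_derivative_signed_pow[OF nz] f1] by (simp add: mult.assoc)
  moreover have "y \<noteq> 0" using S by auto
  ultimately show ?thesis
    unfolding plap_def by (intro divergence_radial[OF _ _ S(1,2)]) (simp_all add: flux)
qed

lemma radial_C2_on_DERIV:
  fixes f :: "real \<Rightarrow> real" and e :: "'a::euclidean_space"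
  assumes C: "C2_on U (\<lambda>x. f (norm x))" and e: "norm e = 1" and s: "0 < s" "s *\<^sub>R e \<in> U"
  shows "(f has_real_derivative deriv f s) (at s)"
    and "(deriv f has_real_derivative deriv (deriv f) s) (at s)"
proof -
  define w where "w = (\<lambda>x::'a. f (norm x))"
  define S where "S = {0<..} \<inter> (\<lambda>t. t *\<^sub>R e) -` U"
  have U: "open U" "\<forall>x\<in>U. w differentiable (at x)" "\<forall>x\<in>U. grad w differentiable (at x)"
    using C unfolding C2_on_def w_def by auto
  have "open S" unfolding S_def
    by (intro open_Int open_greaterThan continuous_open_vimage U) (auto intro: continuous_intros)
  have "s \<in> S" using s by (simp add: S_def)
  have df: "(f has_real_derivative deriv f t) (at t)" if "t \<in> S" for t
  proof -
    have t: "t > 0" "t *\<^sub>R e \<in> U" using that by (auto simp: S_def)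
    have "(\<lambda>t. w (t *\<^sub>R e)) differentiable (at t)"
      by (rule differentiable_compose[where g="\<lambda>t. t *\<^sub>R e"]) (use U t in auto)
    then obtain D where "((\<lambda>t. w (t *\<^sub>R e)) has_derivative D) (at t)"
      by (auto simp: differentiable_def)
    then have "(f has_derivative D) (at t)"
      by (rule has_derivative_transform_within_open[where s="{0<..}"]) (use t e in \<open>auto simp: w_def\<close>)
    then have "f differentiable (at t)" by (auto simp: differentiable_def)
    then show ?thesis by (simp add: DERIV_deriv_iff_real_differentiable)
  qed
  then show "(f has_real_derivative deriv f s) (at s)" using \<open>s \<in> S\<close> .
  have deriv_eq: "deriv f t = grad w (t *\<^sub>R e) \<bullet> e" if "t \<in> S" for t
  proof -
    have t: "t > 0" using that by (simp add: S_def)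
    moreover have "e \<noteq> 0" "sgn e = e" using e by (auto simp: sgn_div_norm)
    ultimately have "grad w (t *\<^sub>R e) = deriv f t *\<^sub>R e"
      using grad_radial[of "t *\<^sub>R e" f "deriv f t"] df[OF that] e by (simp add: w_def sgn_scaleR)
    then show ?thesis using e by (simp add: dot_square_norm)
  qed
  have "(\<lambda>t. grad w (t *\<^sub>R e)) differentiable (at s)"
    by (rule differentiable_compose[where g="\<lambda>t. t *\<^sub>R e"]) (use U s in auto)
  then have "(\<lambda>t. grad w (t *\<^sub>R e) \<bullet> e) differentiable (at s)"
    by (simp add: differentiable_inner)
  then obtain D where "((\<lambda>t. grad w (t *\<^sub>R e) \<bullet> e) has_derivative D) (at s)"
    by (auto simp: differentiable_def)
  then have "(deriv f has_derivative D) (at s)"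
    by (rule has_derivative_transform_within_open[OF _ \<open>open S\<close> \<open>s \<in> S\<close>]) (simp add: deriv_eq)
  then have "deriv f differentiable (at s)" by (auto simp: differentiable_def)
  then show "(deriv f has_real_derivative deriv (deriv f) s) (at s)"
    by (simp add: DERIV_deriv_iff_real_differentiable)
qed

lemma has_real_derivative_radial_flux_quotient:
  fixes f :: "real \<Rightarrow> real" and e :: "'a::euclidean_space"
  assumes C: "C2_on U (\<lambda>x::'a. f (norm x))" and e: "norm e = 1" and r: "0 < r" "r *\<^sub>R e \<in> U"
    and pos: "f r > 0" and nz: "deriv f r \<noteq> 0"
  shows "((\<lambda>s. s ^ (DIM('a) - 1) * signed_pow p (deriv f s / f s)) has_real_derivative
      r ^ (DIM('a) - 1) * (plap p (\<lambda>x. f (norm x)) (r *\<^sub>R e) / f r powr (p - 1)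
                           - (p - 1) * \<bar>deriv f r / f r\<bar> powr p)) (at r)"
proof -
  define S where "S = - {0} \<inter> (\<lambda>z::'a. norm z *\<^sub>R e) -` U"
  have "open S"
    unfolding S_def using C
    by (intro open_Int open_Compl closed_singleton continuous_open_vimage)
       (auto simp: C2_on_def intro!: continuous_intros)
  moreover have "r *\<^sub>R e \<in> S" "0 \<notin> S" using r e by (auto simp: S_def)
  moreover have "(f has_real_derivative deriv f (norm z)) (at (norm z))" if "z \<in> S" for z
    using that radial_C2_on_DERIV(1)[OF C e] by (auto simp: S_def)
  ultimately have "plap p (\<lambda>x. f (norm x)) (r *\<^sub>R e) = (p - 1) * \<bar>deriv f r\<bar> powr (p - 2) * deriv (deriv f) r
      + real (DIM('a) - 1) * signed_pow p (deriv f r) / r"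
    using plap_radial[of S "r *\<^sub>R e" f "deriv f"] radial_C2_on_DERIV(2)[OF C e r] r e nz by simp
  then show ?thesis
    using has_real_derivative_flux_quotient[OF radial_C2_on_DERIV[OF C e r] pos nz, of "DIM('a) - 1" p] r
    by simp
qed

lemma positive_persists_right:
  fixes f f' :: "real \<Rightarrow> real"
  assumes ab: "a \<le> b" and fa: "f a > 0"
    and f: "\<And>t. t \<in> {a..b} \<Longrightarrow> (f has_real_derivative f' t) (at t)"
    and f': "\<And>t. t \<in> {a<..<b} \<Longrightarrow> f t > 0 \<Longrightarrow> f' t \<ge> 0"
  shows "f b > 0"
proof (rule ccontr)
  assume "\<not> f b > 0"
  define Z where "Z = {a..b} \<inter> f -` {..0}"
  have "continuous_on {a..b} f"
    using f by (meson DERIV_continuous continuous_at_imp_continuous_on)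
  then have "closed Z" unfolding Z_def by (rule continuous_closed_preimage) auto
  moreover have "b \<in> Z" "bdd_below Z"
    using \<open>\<not> f b > 0\<close> ab by (auto simp: Z_def bdd_below_def)
  ultimately have sZ: "Inf Z \<in> Z" using closed_contains_Inf by blast
  define s where "s = Inf Z"
  have "a < s" using sZ fa by (auto simp: s_def Z_def less_eq_real_def)
  have pos: "f t > 0" if "a \<le> t" "t < s" for t
  proof (rule ccontr)
    assume "\<not> f t > 0"
    then have "t \<in> Z" using that sZ by (auto simp: Z_def s_def)
    then have "s \<le> t" unfolding s_def using \<open>bdd_below Z\<close> by (rule cInf_lower)
    then show False using that by simp
  qed
  obtain z where z: "a < z" "z < s" "f s - f a = (s - a) * f' z"
    using MVT2[OF \<open>a < s\<close>, of f f'] f sZ by (auto simp: s_def Z_def)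
  have "f' z \<ge> 0" using f' pos[of z] z sZ by (auto simp: s_def Z_def)
  then have "(s - a) * f' z \<ge> 0" using \<open>a < s\<close> by simp
  then have "f s \<ge> f a" using z by linarith
  then show False using sZ fa by (auto simp: s_def Z_def)
qed

lemma negative_persists_left:
  fixes f f' :: "real \<Rightarrow> real"
  assumes ab: "a \<le> b" and fb: "f b < 0"
    and f: "\<And>t. t \<in> {a..b} \<Longrightarrow> (f has_real_derivative f' t) (at t)"
    and f': "\<And>t. t \<in> {a<..<b} \<Longrightarrow> f t < 0 \<Longrightarrow> f' t \<ge> 0"
  shows "f a < 0"
proof -
  have "- f (- (- a)) > 0"
  proof (rule positive_persists_right[where f = "\<lambda>t. - f (- t)" and f' = "\<lambda>t. f' (- t)"])
    fix t assume "t \<in> {- b..- a}"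
    then have "(f has_real_derivative f' (- t)) (at (- t))" using f by simp
    then show "((\<lambda>t. - f (- t)) has_real_derivative f' (- t)) (at t)"
      using DERIV_mirror by (auto intro: DERIV_minus[where D = "- f' (- t)", simplified])
  qed (use ab fb f' in auto)
  then show ?thesis by simp
qed

lemma log_derivative_comparison:
  fixes a b D D' :: "real \<Rightarrow> real" and J :: "real set"
  assumes J: "is_interval J"
    and a_sign: "(\<forall>r\<in>J. a r > 0) \<or> (\<forall>r\<in>J. a r < 0)"
    and b_sign: "(\<forall>r\<in>J. b r > 0) \<or> (\<forall>r\<in>J. b r < 0)"
    and D: "\<And>r. r \<in> J \<Longrightarrow> (D has_real_derivative D' r) (at r)"
    and D_sgn: "\<And>r. r \<in> J \<Longrightarrow> sgn (D r) = sgn (a r - b r)"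
    and D': "\<And>r. r \<in> interior J \<Longrightarrow> \<bar>a r\<bar> < \<bar>b r\<bar> \<Longrightarrow> D' r \<ge> 0"
  shows "(\<forall>r\<in>J. a r \<le> b r) \<or> (\<exists>\<rho>\<in>J. \<forall>r\<in>J. \<rho> \<le> r \<longrightarrow> b r \<le> a r)"
proof (cases "\<forall>r\<in>J. a r \<le> b r")
  case False
  then obtain r1 where r1: "r1 \<in> J" "b r1 < a r1" by force
  have neg: "D t < 0 \<longleftrightarrow> a t < b t" and pos: "D t > 0 \<longleftrightarrow> a t > b t" if "t \<in> J" for t
    using D_sgn[OF that] sgn_less[of "D t"] sgn_less[of "a t - b t"]
      sgn_greater[of "D t"] sgn_greater[of "a t - b t"] by auto
  have "b r \<le> a r" if r: "r \<in> J" "r1 \<le> r" for r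
  proof (rule ccontr)
    assume "\<not> b r \<le> a r"
    have sub: "{r1..r} \<subseteq> J" using mem_is_interval_1_I[OF J r1(1) r(1)] by auto
    then have "{r1<..<r} \<subseteq> interior J" by (intro interior_maximal) auto
    with sub have inner: "t \<in> J" "t \<in> interior J" if "t \<in> {r1<..<r}" for t
      using that by auto
    have D_at: "(D has_real_derivative D' t) (at t)" if "t \<in> {r1..r}" for t
      using D sub that by blast
    from a_sign b_sign consider
      "\<forall>r\<in>J. a r > 0" "\<forall>r\<in>J. b r > 0" | "\<forall>r\<in>J. a r < 0" "\<forall>r\<in>J. b r < 0" |
      "\<forall>r\<in>J. a r > 0" "\<forall>r\<in>J. b r < 0" | "\<forall>r\<in>J. a r < 0" "\<forall>r\<in>J. b r > 0" by blast
    then show False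
    proof cases
      case 1
      have "D' t \<ge> 0" if "t \<in> {r1<..<r}" "D t < 0" for t
        using D'[OF inner(2)[OF that(1)]] 1 neg inner(1)[OF that(1)] that(2) by auto
      then have "D r1 < 0"
        using negative_persists_left[of r1 r D D'] r neg \<open>\<not> b r \<le> a r\<close> D_at by auto
      then show False using neg r1 by simp
    next
      case 2
      have "D' t \<ge> 0" if "t \<in> {r1<..<r}" "D t > 0" for t
        using D'[OF inner(2)[OF that(1)]] 2 pos inner(1)[OF that(1)] that(2) by auto
      then have "D r > 0"
        using positive_persists_right[of r1 r D D'] r pos r1 D_at by auto
      then show False using pos r \<open>\<not> b r \<le> a r\<close> by simp
    next
      case 3
      then show False using r \<open>\<not> b r \<le> a r\<close> by force
    next
      case 4
      then show False using r1 by force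
    qed
  qed
  then show ?thesis using r1 by blast
qed simp

lemma sub_super_flux_derivative_nonneg:
  fixes u v L M V \<alpha> \<beta> c :: real
  assumes p: "p > 1" and pos: "u > 0" "v > 0" "c \<ge> 0"
    and sub: "- L - V * \<bar>u\<bar> powr (p - 2) * u \<le> 0"
    and super: "- M - V * \<bar>v\<bar> powr (p - 2) * v \<ge> 0"
    and less: "\<bar>\<alpha>\<bar> < \<bar>\<beta>\<bar>"
  shows "c * (L / u powr (p - 1) - (p - 1) * \<bar>\<alpha>\<bar> powr p)
         - c * (M / v powr (p - 1) - (p - 1) * \<bar>\<beta>\<bar> powr p) \<ge> 0"
proof -
  have "\<bar>t\<bar> powr (p - 2) * t = t powr (p - 1)" if "t > 0" for t
    using that signed_pow_eq_mult_abs_powr[of p t] signed_pow_pos[of t p] by (simp add: mult.commute)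
  then have "- V \<le> L / u powr (p - 1)" "M / v powr (p - 1) \<le> - V"
    using sub super pos by (simp_all add: field_simps)
  moreover have "(p - 1) * \<bar>\<alpha>\<bar> powr p \<le> (p - 1) * \<bar>\<beta>\<bar> powr p"
    using less p by (simp add: powr_less_mono2 less_imp_le)
  ultimately show ?thesis
    using pos by (simp add: right_diff_distrib[symmetric])
qed

lemma radial_log_derivative_comparison:
  fixes \<phi> \<psi> V :: "real \<Rightarrow> real" and e :: "'a::euclidean_space" and J :: "real set"
  assumes p: "p > 1" and J: "is_interval J" "J \<subseteq> {0<..}" and e: "norm e = 1"
    and C2: "C2_on U (\<lambda>x::'a. \<phi> (norm x))" "C2_on W (\<lambda>x::'a. \<psi> (norm x))"
    and J_sub: "(\<lambda>r. r *\<^sub>R e) ` J \<subseteq> U" "(\<lambda>r. r *\<^sub>R e) ` J \<subseteq> W"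
    and pos: "\<forall>r\<in>J. \<phi> r > 0" "\<forall>r\<in>J. \<psi> r > 0"
    and mono: "(\<forall>r\<in>J. deriv \<phi> r > 0) \<or> (\<forall>r\<in>J. deriv \<phi> r < 0)"
      "(\<forall>r\<in>J. deriv \<psi> r > 0) \<or> (\<forall>r\<in>J. deriv \<psi> r < 0)"
    and sub: "\<And>r. r \<in> interior J \<Longrightarrow>
      - plap p (\<lambda>x. \<phi> (norm x)) (r *\<^sub>R e) - V r * \<bar>\<phi> r\<bar> powr (p - 2) * \<phi> r \<le> 0"
    and super: "\<And>r. r \<in> interior J \<Longrightarrow>
      - plap p (\<lambda>x. \<psi> (norm x)) (r *\<^sub>R e) - V r * \<bar>\<psi> r\<bar> powr (p - 2) * \<psi> r \<ge> 0"
  shows "(\<forall>r\<in>J. deriv \<phi> r / \<phi> r \<le> deriv \<psi> r / \<psi> r) \<or>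
         (\<exists>\<rho>\<in>J. \<forall>r\<in>J. \<rho> \<le> r \<longrightarrow> deriv \<psi> r / \<psi> r \<le> deriv \<phi> r / \<phi> r)"
proof (rule log_derivative_comparison[OF J(1)])
  define m where "m = DIM('a) - 1"
  define a where "a r = deriv \<phi> r / \<phi> r" for r
  define b where "b r = deriv \<psi> r / \<psi> r" for r
  let ?Q = "\<lambda>f r. r ^ m * (plap p (\<lambda>x::'a. f (norm x)) (r *\<^sub>R e) / f r powr (p - 1)
                            - (p - 1) * \<bar>deriv f r / f r\<bar> powr p)"
  have "(\<forall>r\<in>J. deriv f r / f r > 0) \<or> (\<forall>r\<in>J. deriv f r / f r < 0)"
    if "\<forall>r\<in>J. f r > 0" "(\<forall>r\<in>J. deriv f r > 0) \<or> (\<forall>r\<in>J. deriv f r < 0)" for f :: "real \<Rightarrow> real"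
    using that by (metis divide_neg_pos divide_pos_pos)
  then show "(\<forall>r\<in>J. a r > 0) \<or> (\<forall>r\<in>J. a r < 0)" "(\<forall>r\<in>J. b r > 0) \<or> (\<forall>r\<in>J. b r < 0)"
    using mono pos by (simp_all add: a_def b_def)
  show "((\<lambda>r. r ^ m * signed_pow p (a r) - r ^ m * signed_pow p (b r)) has_real_derivative
      ?Q \<phi> r - ?Q \<psi> r) (at r)" if "r \<in> J" for r
  proof -
    have r: "0 < r" "r *\<^sub>R e \<in> U" "r *\<^sub>R e \<in> W" using that J J_sub by auto
    have "deriv \<phi> r \<noteq> 0" "deriv \<psi> r \<noteq> 0" using that mono by force+
    then show ?thesis
      unfolding a_def b_def m_def using that pos
      by (intro DERIV_diff has_real_derivative_radial_flux_quotient[OF C2(1) e r(1,2)]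
          has_real_derivative_radial_flux_quotient[OF C2(2) e r(1,3)]) simp_all
  qed
  show "sgn (r ^ m * signed_pow p (a r) - r ^ m * signed_pow p (b r)) = sgn (a r - b r)" if "r \<in> J" for r
    using that J sgn_signed_pow_diff[OF p, of "a r" "b r"]
    by (auto simp: right_diff_distrib[symmetric] sgn_mult)
  show "?Q \<phi> r - ?Q \<psi> r \<ge> 0" if "r \<in> interior J" "\<bar>a r\<bar> < \<bar>b r\<bar>" for r
  proof -
    have "r \<in> J" "r > 0" using that(1) interior_subset J(2) by blast+
    then show ?thesis
      using sub_super_flux_derivative_nonneg[OF p _ _ _ sub[OF that(1)] super[OF that(1)] that(2)] pos
      by (simp add: a_def b_def)
  qed
qed

lemma deriv_divide_sign_iff:
  assumes "(f has_real_derivative f1) (at r)" "(g has_real_derivative g1) (at r)" "f r > 0" "g r > 0"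
  shows "deriv (\<lambda>s. f s / g s) r \<le> 0 \<longleftrightarrow> f1 / f r \<le> g1 / g r"
    and "deriv (\<lambda>s. f s / g s) r \<ge> 0 \<longleftrightarrow> g1 / g r \<le> f1 / f r"
proof -
  have "((\<lambda>s. f s / g s) has_real_derivative (f1 * g r - f r * g1) / (g r * g r)) (at r)"
    using DERIV_divide[OF assms(1,2)] assms(4) by simp
  then have eq: "deriv (\<lambda>s. f s / g s) r = f r / g r * (f1 / f r - g1 / g r)"
    using assms(3,4) by (simp add: DERIV_imp_deriv field_simps)
  have sign: "c * d \<le> 0 \<longleftrightarrow> d \<le> 0" "0 \<le> c * d \<longleftrightarrow> 0 \<le> d" if "0 < c" for c d :: real
    using that by (simp_all add: mult_le_0_iff zero_le_mult_iff)
  have "f r / g r > 0" using assms(3,4) by simp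
  from sign[OF this] show "deriv (\<lambda>s. f s / g s) r \<le> 0 \<longleftrightarrow> f1 / f r \<le> g1 / g r"
    and "deriv (\<lambda>s. f s / g s) r \<ge> 0 \<longleftrightarrow> g1 / g r \<le> f1 / f r"
    by (simp_all only: eq diff_le_0_iff_le diff_ge_0_iff_ge)
qed

lemma interior_atLeast_ereal_lessThan:
  "interior {r. r0 \<le> r \<and> ereal r < R0} = {r. r0 < r \<and> ereal r < R0}"
proof -
  have "{r. r0 \<le> r \<and> ereal r < R0} = {r0..} \<inter> {r. ereal r < R0}" by auto
  moreover have "open {r. ereal r < R0}"
    by (intro open_Collect_less continuous_intros)
  ultimately show ?thesis
    by (auto simp: interior_Int interior_real_atLeast interior_open)
qed

lemma radial_ratio_deriv_alternative:
  fixes p r0 :: real and R0 :: ereal and V :: "'a::euclidean_space \<Rightarrow> real" and \<phi> \<psi> :: "real \<Rightarrow> real"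
  defines "I \<equiv> {r. r0 \<le> r \<and> ereal r < R0}"
  assumes p: "p > 1" and r0: "0 < r0"
    and C2: "C2_annulus r0 R0 (\<lambda>x::'a. \<phi> (norm x))" "C2_annulus r0 R0 (\<lambda>x::'a. \<psi> (norm x))"
    and pos: "\<forall>r\<in>I. \<phi> r > 0" "\<forall>r\<in>I. \<psi> r > 0"
    and mono: "(\<forall>r\<in>I. deriv \<phi> r > 0) \<or> (\<forall>r\<in>I. deriv \<phi> r < 0)"
      "(\<forall>r\<in>I. deriv \<psi> r > 0) \<or> (\<forall>r\<in>I. deriv \<psi> r < 0)"
    and sub: "\<forall>x\<in>annulus_oo r0 R0.
       - plap p (\<lambda>y. \<phi> (norm y)) x - V x * \<bar>\<phi> (norm x)\<bar> powr (p - 2) * \<phi> (norm x) \<le> 0"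
    and super: "\<forall>x\<in>annulus_oo r0 R0.
       - plap p (\<lambda>y. \<psi> (norm y)) x - V x * \<bar>\<psi> (norm x)\<bar> powr (p - 2) * \<psi> (norm x) \<ge> 0"
  shows "(\<forall>r\<in>I. deriv (\<lambda>s. \<phi> s / \<psi> s) r \<le> 0) \<or>
         (\<exists>\<rho>\<in>I. \<forall>r\<in>I. \<rho> \<le> r \<longrightarrow> deriv (\<lambda>s. \<phi> s / \<psi> s) r \<ge> 0)"
proof -
  obtain e :: 'a where e: "norm e = 1"
    using norm_Basis nonempty_Basis by blast
  obtain U W where U: "annulus_co r0 R0 \<subseteq> U" "C2_on U (\<lambda>x::'a. \<phi> (norm x))"
    and W: "annulus_co r0 R0 \<subseteq> W" "C2_on W (\<lambda>x::'a. \<psi> (norm x))"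
    using C2 unfolding C2_annulus_def by blast
  have I_pos: "I \<subseteq> {0<..}" using r0 by (auto simp: I_def)
  have ray_U: "r *\<^sub>R e \<in> U" "r *\<^sub>R e \<in> W" if "r \<in> I" for r
  proof -
    have "norm (r *\<^sub>R e) = r" using that I_pos e by auto
    then have "r *\<^sub>R e \<in> annulus_co r0 R0" using that by (simp add: I_def annulus_co_def)
    then show "r *\<^sub>R e \<in> U" "r *\<^sub>R e \<in> W" using U(1) W(1) by auto
  qed
  have ray_oo: "r *\<^sub>R e \<in> annulus_oo r0 R0" "norm (r *\<^sub>R e) = r" if "r \<in> interior I" for r
    using that r0 e by (auto simp: I_def interior_atLeast_ereal_lessThan annulus_oo_def)
  have I: "is_interval I"
    unfolding is_interval_1 I_def by (auto intro: order.trans ereal_less_le)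
  have log_derivs: "(\<forall>r\<in>I. deriv \<phi> r / \<phi> r \<le> deriv \<psi> r / \<psi> r) \<or>
      (\<exists>\<rho>\<in>I. \<forall>r\<in>I. \<rho> \<le> r \<longrightarrow> deriv \<psi> r / \<psi> r \<le> deriv \<phi> r / \<phi> r)"
  proof (rule radial_log_derivative_comparison[OF p I I_pos e U(2) W(2) _ _ pos mono,
        where V = "\<lambda>r. V (r *\<^sub>R e)"])
    show "(\<lambda>r. r *\<^sub>R e) ` I \<subseteq> U" "(\<lambda>r. r *\<^sub>R e) ` I \<subseteq> W"
      using ray_U by auto
    show "- plap p (\<lambda>x. \<phi> (norm x)) (r *\<^sub>R e) - V (r *\<^sub>R e) * \<bar>\<phi> r\<bar> powr (p - 2) * \<phi> r \<le> 0"
      and "- plap p (\<lambda>x. \<psi> (norm x)) (r *\<^sub>R e) - V (r *\<^sub>R e) * \<bar>\<psi> r\<bar> powr (p - 2) * \<psi> r \<ge> 0"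
      if "r \<in> interior I" for r
      using sub super ray_oo[OF that] by force+
  qed
  have le_iff: "deriv (\<lambda>s. \<phi> s / \<psi> s) r \<le> 0 \<longleftrightarrow> deriv \<phi> r / \<phi> r \<le> deriv \<psi> r / \<psi> r"
    and ge_iff: "deriv (\<lambda>s. \<phi> s / \<psi> s) r \<ge> 0 \<longleftrightarrow> deriv \<psi> r / \<psi> r \<le> deriv \<phi> r / \<phi> r"
    if "r \<in> I" for r
    using deriv_divide_sign_iff[OF radial_C2_on_DERIV(1)[OF U(2) e] radial_C2_on_DERIV(1)[OF W(2) e]]
      ray_U[OF that] that I_pos pos by auto
  from log_derivs show ?thesis
  proof
    assume "\<forall>r\<in>I. deriv \<phi> r / \<phi> r \<le> deriv \<psi> r / \<psi> r"
    then show ?thesis using le_iff by blast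
  next
    assume "\<exists>\<rho>\<in>I. \<forall>r\<in>I. \<rho> \<le> r \<longrightarrow> deriv \<psi> r / \<psi> r \<le> deriv \<phi> r / \<phi> r"
    then show ?thesis using ge_iff by blast
  qed
qed

theorem corollary3p4:
  fixes p r0 :: real and R0 :: ereal
    and V :: "real ^ 'n \<Rightarrow> real"
    and \<phi> \<psi> :: "real \<Rightarrow> real"
  assumes N2: "CARD('n) \<ge> 2"
    and p2: "p \<ge> 2"
    and r0: "0 < r0" "ereal r0 < R0"
    and Vcont: "continuous_on (annulus_oo r0 R0) V"
    and Vsign: "(\<forall>x\<in>annulus_oo r0 R0. V x > 0) \<or> (\<forall>x\<in>annulus_oo r0 R0. V x = 0)"
    and uC2: "C2_annulus r0 R0 (\<lambda>x::real^'n. \<phi> (norm x))"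
    and upos: "\<forall>r. r0 \<le> r \<and> ereal r < R0 \<longrightarrow> \<phi> r > 0"
    and umon: "(\<forall>r. r0 \<le> r \<and> ereal r < R0 \<longrightarrow> deriv \<phi> r > 0) \<or>
               (\<forall>r. r0 \<le> r \<and> ereal r < R0 \<longrightarrow> deriv \<phi> r < 0)"
    and usub: "\<forall>x\<in>annulus_oo r0 R0.
       - plap p (\<lambda>y. \<phi> (norm y)) x - V x * \<bar>\<phi> (norm x)\<bar> powr (p - 2) * \<phi> (norm x) \<le> 0"
    and vC2: "C2_annulus r0 R0 (\<lambda>x::real^'n. \<psi> (norm x))"
    and vpos: "\<forall>r. r0 \<le> r \<and> ereal r < R0 \<longrightarrow> \<psi> r > 0"
    and vmon: "(\<forall>r. r0 \<le> r \<and> ereal r < R0 \<longrightarrow> deriv \<psi> r > 0) \<or>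
               (\<forall>r. r0 \<le> r \<and> ereal r < R0 \<longrightarrow> deriv \<psi> r < 0)"
    and vsup: "\<forall>x\<in>annulus_oo r0 R0.
       - plap p (\<lambda>y. \<psi> (norm y)) x - V x * \<bar>\<psi> (norm x)\<bar> powr (p - 2) * \<psi> (norm x) \<ge> 0"
  shows "(\<forall>r. r0 \<le> r \<and> ereal r < R0 \<longrightarrow> deriv (\<lambda>s. \<phi> s / \<psi> s) r \<le> 0) \<or>
         (\<exists>\<rho>. r0 \<le> \<rho> \<and> ereal \<rho> < R0 \<and>
              (\<forall>r. \<rho> \<le> r \<and> ereal r < R0 \<longrightarrow> deriv (\<lambda>s. \<phi> s / \<psi> s) r \<ge> 0))"
proof -
  have "p > 1" using p2 by simp
  from radial_ratio_deriv_alternative[OF this r0(1) uC2 vC2 _ _ _ _ usub vsup] upos vpos umon vmon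
  have "(\<forall>r\<in>{r. r0 \<le> r \<and> ereal r < R0}. deriv (\<lambda>s. \<phi> s / \<psi> s) r \<le> 0) \<or>
      (\<exists>\<rho>\<in>{r. r0 \<le> r \<and> ereal r < R0}. \<forall>r\<in>{r. r0 \<le> r \<and> ereal r < R0}.
         \<rho> \<le> r \<longrightarrow> deriv (\<lambda>s. \<phi> s / \<psi> s) r \<ge> 0)"
    by simp
  then show ?thesis
  proof
    assume "\<exists>\<rho>\<in>{r. r0 \<le> r \<and> ereal r < R0}. \<forall>r\<in>{r. r0 \<le> r \<and> ereal r < R0}.
      \<rho> \<le> r \<longrightarrow> deriv (\<lambda>s. \<phi> s / \<psi> s) r \<ge> 0"
    then obtain \<rho> where "r0 \<le> \<rho>" "ereal \<rho> < R0"
      and "\<forall>r. r0 \<le> r \<and> ereal r < R0 \<longrightarrow> \<rho> \<le> r \<longrightarrow> deriv (\<lambda>s. \<phi> s / \<psi> s) r \<ge> 0"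
      by auto
    then show ?thesis by (meson order.trans)
  qed simp
qed

end
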